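(* Let $S\ni h$ be a polarized lattice. A subset $\Gamma\subset\operatorname{root}_1(S,h)$ admits a Weyl chamber for $\operatorname{rt}(S,h)$ compatible with $\Gamma$ if and only if there is no separating root $r\in\operatorname{root}_0(S,h)$. In this case, each Weyl chamber $\Delta'$ for the lattice $S':=(\mathbb{Z}h+\mathbb{Z}\Gamma)^\perp\subset S$ is a face of a unique Weyl chamber $\Delta$ for $\operatorname{rt}(S,h)$ compatible with $\Gamma$.
   Context: All lattices are even and nondegenerate; $(S,h)$ polarized means $S$ hyperbolic and $h^2>0$. $\operatorname{root}_n(S,h)=\{r\in S: r^2=-2,\ r\cdot h=n\}$; $\operatorname{rt}(S,h)$ is the root lattice spanned by $\operatorname{root}_0(S,h)$; a Weyl chamber for the root lattice of a negative definite lattice $S'$ is one for the lattice generated by roots of $S'$. A Weyl chamber $\Delta$ is determined by its set of positive roots $P_\Delta$ (closed half of the roots); $\mathfrak{b}(\Delta)$ are its simple roots. $\operatorname{Fn}_\Delta(S,h)=\{l\in\operatorname{root}_1(S,h): l\cdot e\ge0\ \forall e\in\mathfrak{b}(\Delta)\}$. A Weyl chamber $\Delta$ is compatible with $\Gamma$ if $\Gamma\subset\operatorname{Fn}_\Delta(S,h)$. A root $r\in\operatorname{root}_0(S,h)$ is separating (with respect to $\Gamma$) if there are $u,v\in\Gamma$ with $r\cdot u>0$ and $r\cdot v<0$. That $\Delta'$ is a face of $\Delta$ means $P_\Delta\cap S'=P_{\Delta'}$. *)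

theory Defs
  imports "HOL-Analysis.Analysis"
begin

text \<open>An (integral) lattice of rank CARD('n) is modelled as int^'n with a
  symmetric integer Gram matrix G; the form is bf G.\<close>

definition bf :: "int^'n^'n \<Rightarrow> int^'n \<Rightarrow> int^'n \<Rightarrow> int" where
  "bf G x y = (\<Sum>i\<in>UNIV. \<Sum>j\<in>UNIV. x$i * G$i$j * y$j)"

definition rbf :: "int^'n^'n \<Rightarrow> real^'n \<Rightarrow> real^'n \<Rightarrow> real" where
  "rbf G x y = (\<Sum>i\<in>UNIV. \<Sum>j\<in>UNIV. x$i * of_int (G$i$j) * y$j)"

definition rvec :: "int^'n \<Rightarrow> real^'n" where
  "rvec x = (\<chi> i. of_int (x$i))"

definition even_lattice :: "int^'n^'n \<Rightarrow> bool" where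
  "even_lattice G \<longleftrightarrow> (\<forall>i j. G$i$j = G$j$i) \<and> (\<forall>x. even (bf G x x))"

definition nondegenerate :: "int^'n^'n \<Rightarrow> bool" where
  "nondegenerate G \<longleftrightarrow> (\<forall>x. (\<forall>y. bf G x y = 0) \<longrightarrow> x = 0)"

definition posdef_subspace :: "int^'n^'n \<Rightarrow> (real^'n) set \<Rightarrow> bool" where
  "posdef_subspace G V \<longleftrightarrow> subspace V \<and> (\<forall>v\<in>V. v \<noteq> 0 \<longrightarrow> rbf G v v > 0)"

text \<open>Hyperbolic: nondegenerate with positive index of inertia 1.\<close>
definition hyperbolic :: "int^'n^'n \<Rightarrow> bool" where
  "hyperbolic G \<longleftrightarrow> nondegenerate G
     \<and> (\<exists>V. posdef_subspace G V \<and> dim V = 1)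
     \<and> (\<forall>V. posdef_subspace G V \<longrightarrow> dim V \<le> 1)"

definition polarized :: "int^'n^'n \<Rightarrow> int^'n \<Rightarrow> bool" where
  "polarized G h \<longleftrightarrow> even_lattice G \<and> hyperbolic G \<and> bf G h h > 0"

definition root_n :: "int^'n^'n \<Rightarrow> int^'n \<Rightarrow> int \<Rightarrow> (int^'n) set" where
  "root_n G h n = {r. bf G r r = -2 \<and> bf G r h = n}"

inductive_set zspan :: "(int^'n) set \<Rightarrow> (int^'n) set" for A where
  zspan_zero: "0 \<in> zspan A"
| zspan_add: "x \<in> zspan A \<Longrightarrow> a \<in> A \<Longrightarrow> x + a \<in> zspan A"
| zspan_diff: "x \<in> zspan A \<Longrightarrow> a \<in> A \<Longrightarrow> x - a \<in> zspan A"

definition lattice_roots :: "int^'n^'n \<Rightarrow> (int^'n) set \<Rightarrow> (int^'n) set" where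
  "lattice_roots G L = {r \<in> L. bf G r r = -2}"

definition rt :: "int^'n^'n \<Rightarrow> int^'n \<Rightarrow> (int^'n) set" where
  "rt G h = zspan (root_n G h 0)"

definition perp_lattice :: "int^'n^'n \<Rightarrow> (int^'n) set \<Rightarrow> (int^'n) set" where
  "perp_lattice G A = {x. \<forall>a\<in>A. bf G x a = 0}"

text \<open>A Weyl chamber for a (finite) set of roots \<Phi>, represented by its set of
  positive roots: the roots positive on a vector of the chamber (a vector of the
  real span of \<Phi> orthogonal to no root).\<close>
definition weyl_chamber_roots :: "int^'n^'n \<Rightarrow> (int^'n) set \<Rightarrow> (int^'n) set \<Rightarrow> bool" where
  "weyl_chamber_roots G \<Phi> P \<longleftrightarrow>
     (\<exists>x \<in> span (rvec ` \<Phi>). (\<forall>r\<in>\<Phi>. rbf G (rvec r) x \<noteq> 0)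
        \<and> P = {r\<in>\<Phi>. rbf G (rvec r) x > 0})"

definition weyl_chamber :: "int^'n^'n \<Rightarrow> (int^'n) set \<Rightarrow> (int^'n) set \<Rightarrow> bool" where
  "weyl_chamber G L P \<longleftrightarrow>
     weyl_chamber_roots G (lattice_roots G (zspan (lattice_roots G L))) P"

definition simple_roots :: "(int^'n) set \<Rightarrow> (int^'n) set" where
  "simple_roots P = {e\<in>P. \<not> (\<exists>a\<in>P. \<exists>b\<in>P. e = a + b)}"

definition Fn :: "int^'n^'n \<Rightarrow> int^'n \<Rightarrow> (int^'n) set \<Rightarrow> (int^'n) set" where
  "Fn G h P = {l \<in> root_n G h 1. \<forall>e\<in>simple_roots P. bf G l e \<ge> 0}"

definition compatible :: "int^'n^'n \<Rightarrow> int^'n \<Rightarrow> (int^'n) set \<Rightarrow> (int^'n) set \<Rightarrow> bool" where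
  "compatible G h P \<Gamma> \<longleftrightarrow> \<Gamma> \<subseteq> Fn G h P"

definition separating :: "int^'n^'n \<Rightarrow> int^'n \<Rightarrow> (int^'n) set \<Rightarrow> int^'n \<Rightarrow> bool" where
  "separating G h \<Gamma> r \<longleftrightarrow> r \<in> root_n G h 0 \<and>
     (\<exists>u\<in>\<Gamma>. \<exists>v\<in>\<Gamma>. bf G r u > 0 \<and> bf G r v < 0)"

definition is_face :: "(int^'n) set \<Rightarrow> (int^'n) set \<Rightarrow> (int^'n) set \<Rightarrow> bool" where
  "is_face P P' L' \<longleftrightarrow> P \<inter> L' = P'"

end

theory Submission
  imports Defs
begin

text \<open>Since h.h > 0 and S is hyperbolic, the orthogonal complement of h is negative definite,
  so root_0(S,h) is a finite root system whose Weyl chambers are the sets of roots positive on a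
  regular vector x. On a compatible chamber every l \<in> \<Gamma> is nonnegative on all positive roots
  (they are sums of simple roots). This rules out separating roots, and it shows that a compatible
  some l \<in> \<Gamma>, hence is positive in every compatible chamber. Conversely, start from a chamber
  whose trace on the orthogonal complement of \<Gamma> is the given chamber \<Delta>'. If some l \<in> \<Gamma> is
  negative on a simple root e, reflect in e: the positive roots change only by replacing e with -e,
  pairing negatively with \<Gamma> drops while the roots orthogonal to \<Gamma> keep their signs, and the
  descent ends at a compatible chamber with face \<Delta>'.\<close>

section \<open>The integral form and its real extension\<close>

lemma bf_add_left: "bf G (x + y) z = bf G x z + bf G y z"
  and bf_add_right: "bf G z (x + y) = bf G z x + bf G z y"
  and bf_diff_left: "bf G (x - y) z = bf G x z - bf G y z"
  and bf_diff_right: "bf G z (x - y) = bf G z x - bf G z y"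
  and bf_minus_left: "bf G (- x) z = - bf G x z"
  and bf_minus_right: "bf G z (- x) = - bf G z x"
  and bf_smult_left: "bf G (c *s x) z = c * bf G x z"
  and bf_smult_right: "bf G z (c *s x) = c * bf G z x"
  by (simp_all add: bf_def algebra_simps sum.distrib sum_subtractf sum_negf sum_distrib_left)

lemma bf_zero_left [simp]: "bf G 0 z = 0"
  and bf_zero_right [simp]: "bf G z 0 = 0"
  by (simp_all add: bf_def)

lemmas bf_linear = bf_add_left bf_add_right bf_diff_left bf_diff_right
  bf_minus_left bf_minus_right bf_smult_left bf_smult_right

lemma rbf_add_left: "rbf G (x + y) z = rbf G x z + rbf G y z"
  and rbf_add_right: "rbf G z (x + y) = rbf G z x + rbf G z y"
  and rbf_diff_left: "rbf G (x - y) z = rbf G x z - rbf G y z"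
  and rbf_diff_right: "rbf G z (x - y) = rbf G z x - rbf G z y"
  and rbf_minus_left: "rbf G (- x) z = - rbf G x z"
  and rbf_minus_right: "rbf G z (- x) = - rbf G z x"
  and rbf_scaleR_left: "rbf G (c *\<^sub>R x) z = c * rbf G x z"
  and rbf_scaleR_right: "rbf G z (c *\<^sub>R x) = c * rbf G z x"
  by (simp_all add: rbf_def algebra_simps sum.distrib sum_subtractf sum_negf sum_distrib_left)

lemma rbf_zero_left [simp]: "rbf G 0 z = 0"
  and rbf_zero_right [simp]: "rbf G z 0 = 0"
  by (simp_all add: rbf_def)

lemmas rbf_linear = rbf_add_left rbf_add_right rbf_diff_left rbf_diff_right
  rbf_minus_left rbf_minus_right rbf_scaleR_left rbf_scaleR_right

lemma bf_commute: "(\<And>i j. G$i$j = G$j$i) \<Longrightarrow> bf G x y = bf G y x"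
  unfolding bf_def by (subst sum.swap) (simp add: ac_simps)

lemma rbf_commute: "(\<And>i j. G$i$j = G$j$i) \<Longrightarrow> rbf G x y = rbf G y x"
  unfolding rbf_def by (subst sum.swap) (simp add: ac_simps)

lemma rbf_rvec: "rbf G (rvec x) (rvec y) = of_int (bf G x y)"
  by (simp add: rbf_def bf_def rvec_def)

lemma rvec_add: "rvec (x + y) = rvec x + rvec y"
  and rvec_minus: "rvec (- x) = - rvec x"
  and rvec_smult: "rvec (c *s x) = of_int c *\<^sub>R rvec x"
  and rvec_eq_0_iff: "rvec x = 0 \<longleftrightarrow> x = 0"
  by (simp_all add: rvec_def vec_eq_iff)

lemma bf_eq_sum_transpose: "bf G x y = (\<Sum>j\<in>UNIV. (transpose G *v x)$j * y$j)"
  unfolding bf_def transpose_def matrix_vector_mult_def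
  by (simp add: sum_distrib_right) (subst sum.swap, simp add: ac_simps)

lemma rbf_eq_inner: "rbf G x y = ((\<chi> i j. of_int (G$j$i)) *v x) \<bullet> y"
  unfolding rbf_def matrix_vector_mult_def inner_vec_def
  by (simp add: sum_distrib_right) (subst sum.swap, simp add: ac_simps)

section \<open>The orthogonal complement of h is negative definite\<close>

lemma det_of_int_matrix: "det (\<chi> i j. (of_int (A$i$j) :: 'a::comm_ring_1)) = of_int (det A)"
  unfolding det_def by simp

lemma rat_vector_clear_denominators:
  fixes q :: "rat^'n"
  obtains d :: int and z :: "int^'n" where "d > 0" and "\<And>i. of_int (z$i) = of_int d * q$i"
proof -
  define den where "den i = snd (quotient_of (q$i))" for i
  define d where "d = (\<Prod>i\<in>UNIV. den i)"
  have "\<exists>k. of_int k = of_int d * q$i" for i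
  proof -
    obtain n where "quotient_of (q$i) = (n, den i)"
      unfolding den_def by (metis prod.collapse)
    then have "q$i = of_int n / of_int (den i)" and "den i > 0"
      by (simp_all add: quotient_of_div quotient_of_denom_pos)
    moreover have "d = den i * (\<Prod>j\<in>UNIV - {i}. den j)"
      unfolding d_def by (simp add: prod.remove)
    ultimately have "of_int d * q$i = of_int (n * (\<Prod>j\<in>UNIV - {i}. den j))"
      by simp
    then show ?thesis by metis
  qed
  then obtain z where z: "\<And>i. of_int (z i) = of_int d * q$i"
    by metis
  have "d > 0"
    unfolding d_def den_def by (intro prod_pos) (simp add: quotient_of_denom_pos')
  then show thesis
    using that[of d "\<chi> i. z i"] z by simp
qed

lemma det_nonzero_if_int_kernel_trivial:
  fixes A :: "int^'n^'n"
  assumes kernel: "\<And>z. A *v z = 0 \<Longrightarrow> z = 0"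
  shows "det A \<noteq> 0"
proof
  assume "det A = 0"
  define Aq :: "rat^'n^'n" where "Aq = (\<chi> i j. of_int (A$i$j))"
  have "det Aq = 0"
    unfolding Aq_def det_of_int_matrix \<open>det A = 0\<close> by simp
  then obtain q where "q \<noteq> 0" and "Aq *v q = 0"
    by (metis invertible_det_nz invertible_left_inverse matrix_left_invertible_ker)
  obtain d z where "d > 0" and z: "\<And>i. of_int (z$i) = of_int d * q$i"
    using rat_vector_clear_denominators by blast
  have "(of_int ((A *v z)$j) :: rat) = of_int d * (Aq *v q)$j" for j
    unfolding matrix_vector_mult_def Aq_def by (simp add: z sum_distrib_left ac_simps)
  then have "A *v z = 0"
    using \<open>Aq *v q = 0\<close> by (simp add: vec_eq_iff)
  moreover have "z \<noteq> 0"
  proof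
    assume "z = 0"
    then have "q$i = 0" for i
      using z[of i] \<open>d > 0\<close> by simp
    then show False
      using \<open>q \<noteq> 0\<close> by (simp add: vec_eq_iff)
  qed
  ultimately show False
    using kernel by blast
qed

lemma rbf_nondegenerate:
  fixes G :: "int^'n^'n"
  assumes "nondegenerate G" and "\<And>u. rbf G v u = 0"
  shows "v = 0"
proof -
  define B :: "real^'n^'n" where "B = (\<chi> i j. of_int (G$j$i))"
  have "transpose G *v z = 0 \<Longrightarrow> z = 0" for z
    using assms(1) unfolding nondegenerate_def bf_eq_sum_transpose by simp
  then have "det G \<noteq> 0"
    using det_nonzero_if_int_kernel_trivial[of "transpose G"] by simp
  moreover have "B = transpose (\<chi> i j. of_int (G$i$j))"
    by (simp add: B_def transpose_def)
  ultimately have "invertible B"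
    by (simp add: invertible_det_nz det_of_int_matrix)
  moreover have "B *v v = 0"
    using assms(2)[of "B *v v"] unfolding rbf_eq_inner B_def by simp
  ultimately show "v = 0"
    by (metis inj_matrix_vector_mult injD matrix_vector_mult_0_right)
qed

lemma polarized_sym: "polarized G h \<Longrightarrow> G$i$j = G$j$i"
  by (simp add: polarized_def even_lattice_def)

lemma quadratic_nonpos_imp_linear_coeff_zero:
  fixes a c :: real
  assumes "\<And>t. 2 * t * c - t\<^sup>2 * a \<le> 0"
  shows "c = 0"
proof (rule ccontr)
  assume "c \<noteq> 0"
  define t where "t = c / (\<bar>a\<bar> + 1)"
  have "\<bar>a\<bar> + 1 > 0"
    by simp
  then have c: "c = t * (\<bar>a\<bar> + 1)"
    unfolding t_def by simp
  have "2 * t * c - t\<^sup>2 * a = t\<^sup>2 * (2 * \<bar>a\<bar> + 2 - a)"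
    unfolding c by (simp add: power2_eq_square algebra_simps)
  also have "\<dots> > 0"
    using \<open>c \<noteq> 0\<close> c by (intro mult_pos_pos) auto
  finally show False
    using assms[of t] by simp
qed

lemma posdef_span_orthogonal_pair:
  fixes G :: "int^'n^'n"
  assumes "rbf G a a > 0" and "rbf G b b > 0" and "rbf G a b = 0" and "rbf G b a = 0"
  shows "posdef_subspace G (span {a, b})" and "dim (span {a, b}) = 2"
proof -
  show "posdef_subspace G (span {a, b})"
    unfolding posdef_subspace_def
  proof (intro conjI ballI impI)
    fix u assume "u \<in> span {a, b}" "u \<noteq> 0"
    then obtain s where "u - s *\<^sub>R a \<in> span {b}"
      unfolding span_insert by blast
    then obtain t where "u - s *\<^sub>R a = t *\<^sub>R b"
      unfolding span_singleton by blast
    then have u: "u = s *\<^sub>R a + t *\<^sub>R b"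
      by (simp add: algebra_simps)
    then have "s \<noteq> 0 \<or> t \<noteq> 0"
      using \<open>u \<noteq> 0\<close> by auto
    moreover have "rbf G u u = s\<^sup>2 * rbf G a a + t\<^sup>2 * rbf G b b"
      unfolding u using assms(3,4) by (simp add: rbf_linear power2_eq_square algebra_simps)
    ultimately show "rbf G u u > 0"
      using assms(1,2) by (metis add_pos_nonneg add_nonneg_pos mult_pos_pos mult_nonneg_nonneg
          zero_less_power2 zero_le_power2 less_imp_le)
  qed simp
  have "a \<notin> span {b}"
    using assms(1,4) by (auto simp: span_singleton rbf_linear)
  then have "independent {a, b}"
    using assms(2) by (auto simp: independent_insert)
  moreover have "a \<noteq> b"
    using assms(1,3) by auto
  ultimately show "dim (span {a, b}) = 2"
    by (subst dim_span_eq_card_independent) auto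
qed

lemma rbf_self_nonpos_if_perp:
  fixes G :: "int^'n^'n"
  assumes pol: "polarized G h" and w: "rbf G w (rvec h) = 0"
  shows "rbf G w w \<le> 0"
proof (rule ccontr)
  assume "\<not> ?thesis"
  then have "rbf G w w > 0"
    by simp
  moreover have "rbf G (rvec h) (rvec h) > 0"
    using pol by (simp add: rbf_rvec polarized_def)
  moreover have "rbf G (rvec h) w = 0"
    using w rbf_commute[OF polarized_sym[OF pol]] by metis
  ultimately have "posdef_subspace G (span {rvec h, w})" "dim (span {rvec h, w}) = 2"
    using posdef_span_orthogonal_pair[of G "rvec h" w] w by simp_all
  then show False
    using pol unfolding polarized_def hyperbolic_def by fastforce
qed

lemma rbf_self_neg_if_perp:
  fixes G :: "int^'n^'n"
  assumes pol: "polarized G h" and v: "rbf G v (rvec h) = 0" and "v \<noteq> 0"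
  shows "rbf G v v < 0"
proof (rule ccontr)
  assume "\<not> ?thesis"
  then have vv: "rbf G v v = 0"
    using rbf_self_nonpos_if_perp[OF pol v] by simp
  have hh: "rbf G (rvec h) (rvec h) > 0"
    using pol by (simp add: rbf_rvec polarized_def)
  have v_radical: "rbf G v w = 0" if w: "rbf G w (rvec h) = 0" for w
  proof (rule quadratic_nonpos_imp_linear_coeff_zero)
    fix t
    have "rbf G (v + t *\<^sub>R w) (rvec h) = 0"
      using v w by (simp add: rbf_linear)
    then have "rbf G (v + t *\<^sub>R w) (v + t *\<^sub>R w) \<le> 0"
      by (rule rbf_self_nonpos_if_perp[OF pol])
    moreover have "rbf G (v + t *\<^sub>R w) (v + t *\<^sub>R w) = 2 * t * rbf G v w - t\<^sup>2 * - rbf G w w"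
      using vv rbf_commute[OF polarized_sym[OF pol], of w v]
      by (simp add: rbf_linear power2_eq_square algebra_simps)
    ultimately show "2 * t * rbf G v w - t\<^sup>2 * - rbf G w w \<le> 0"
      by simp
  qed
  have "rbf G v u = 0" for u
  proof -
    define t where "t = rbf G u (rvec h) / rbf G (rvec h) (rvec h)"
    have "rbf G (u - t *\<^sub>R rvec h) (rvec h) = 0"
      unfolding t_def using hh by (simp add: rbf_linear)
    then show ?thesis
      using v_radical[of "u - t *\<^sub>R rvec h"] v by (simp add: rbf_linear)
  qed
  then show False
    using rbf_nondegenerate \<open>v \<noteq> 0\<close> pol unfolding polarized_def hyperbolic_def by blast
qed

lemma bf_self_neg_if_perp:
  fixes G :: "int^'n^'n"
  assumes "polarized G h" and "bf G x h = 0" and "x \<noteq> 0"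
  shows "bf G x x < 0"
  using rbf_self_neg_if_perp[OF assms(1), of "rvec x"] assms(2,3)
  by (simp add: rbf_rvec rvec_eq_0_iff)

lemma rbf_perp_uniformly_negative:
  fixes G :: "int^'n^'n"
  assumes pol: "polarized G h"
  obtains c where "c > 0" and "\<And>v. rbf G v (rvec h) = 0 \<Longrightarrow> rbf G v v \<le> - c * (norm v)\<^sup>2"
proof -
  define K where "K = {v. rbf G v (rvec h) = 0 \<and> norm v = 1}"
  have normalize: "inverse (norm v) *\<^sub>R v \<in> K"
    and rescale: "rbf G v v = (norm v)\<^sup>2 * rbf G (inverse (norm v) *\<^sub>R v) (inverse (norm v) *\<^sub>R v)"
    if "rbf G v (rvec h) = 0" and "v \<noteq> 0" for v
    using that by (simp_all add: K_def rbf_linear power2_eq_square field_simps)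
  show ?thesis
  proof (cases "K = {}")
    case True
    then have zero: "v = 0" if "rbf G v (rvec h) = 0" for v
      using normalize[OF that] by blast
    show ?thesis
    proof (rule that[of 1])
      fix v assume "rbf G v (rvec h) = 0"
      then have "v = 0"
        by (rule zero)
      then show "rbf G v v \<le> - 1 * (norm v)\<^sup>2"
        by simp
    qed simp
  next
    case False
    have "bounded K"
      unfolding K_def bounded_iff by auto
    moreover have "closed K"
      unfolding K_def rbf_def
      by (intro closed_Collect_conj closed_Collect_eq continuous_intros)
    moreover have "continuous_on K (\<lambda>v. rbf G v v)"
      unfolding rbf_def by (intro continuous_intros)
    ultimately obtain v0 where "v0 \<in> K" and v0_max: "\<And>v. v \<in> K \<Longrightarrow> rbf G v v \<le> rbf G v0 v0"
      using continuous_attains_sup[OF _ False] compact_eq_bounded_closed by blast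
    then have "rbf G v0 v0 < 0"
      by (intro rbf_self_neg_if_perp[OF pol]) (auto simp: K_def)
    show ?thesis
    proof (rule that[of "- rbf G v0 v0"])
      fix v assume v: "rbf G v (rvec h) = 0"
      show "rbf G v v \<le> - (- rbf G v0 v0) * (norm v)\<^sup>2"
        using v rescale[OF v] v0_max[OF normalize[OF v]]
        by (cases "v = 0") (auto simp: mult.commute intro: mult_left_mono)
    qed (use \<open>rbf G v0 v0 < 0\<close> in simp)
  qed
qed

lemma finite_int_vectors_bounded: "finite {x::int^'n. \<forall>i. \<bar>x$i\<bar> \<le> B}"
proof -
  have "{x::int^'n. \<forall>i. \<bar>x$i\<bar> \<le> B} \<subseteq> vec_lambda ` (PiE UNIV (\<lambda>_. {-B..B}))"
  proof
    fix x :: "int^'n" assume "x \<in> {x. \<forall>i. \<bar>x$i\<bar> \<le> B}"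
    then have "(\<lambda>i. x$i) \<in> PiE UNIV (\<lambda>_. {-B..B})"
      by (auto simp: abs_le_iff) (metis minus_le_iff)
    then show "x \<in> vec_lambda ` (PiE UNIV (\<lambda>_. {-B..B}))"
      by (metis image_eqI vec_lambda_eta)
  qed
  then show ?thesis
    by (rule finite_subset) (intro finite_imageI finite_PiE, auto)
qed

lemma finite_root_n_0:
  fixes G :: "int^'n^'n"
  assumes pol: "polarized G h"
  shows "finite (root_n G h 0)"
proof -
  obtain c where "c > 0" and c: "\<And>v. rbf G v (rvec h) = 0 \<Longrightarrow> rbf G v v \<le> - c * (norm v)\<^sup>2"
    using rbf_perp_uniformly_negative[OF pol] by blast
  have "root_n G h 0 \<subseteq> {x. \<forall>i. \<bar>x$i\<bar> \<le> \<lceil>2 / c\<rceil>}"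
  proof (intro subsetI CollectI allI)
    fix r i assume "r \<in> root_n G h 0"
    then have "c * (norm (rvec r))\<^sup>2 \<le> 2"
      using c[of "rvec r"] by (simp add: rbf_rvec root_n_def)
    then have "(norm (rvec r))\<^sup>2 \<le> 2 / c"
      using \<open>c > 0\<close> by (simp add: field_simps)
    moreover have "\<bar>r$i\<bar> \<le> (r$i)\<^sup>2"
      using mult_left_mono[of 1 "\<bar>r$i\<bar>" "\<bar>r$i\<bar>"]
      by (cases "r$i = 0") (auto simp: power2_eq_square)
    then have "of_int \<bar>r$i\<bar> \<le> (rvec r $ i)\<^sup>2"
      unfolding rvec_def by (metis of_int_le_iff of_int_power vec_lambda_beta)
    moreover have "(rvec r $ i)\<^sup>2 \<le> (norm (rvec r))\<^sup>2"
      by (metis component_le_norm_cart power2_abs abs_ge_zero power_mono)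
    ultimately have "of_int \<bar>r$i\<bar> \<le> 2 / c"
      by linarith
    then show "\<bar>r$i\<bar> \<le> \<lceil>2 / c\<rceil>"
      by (meson le_ceiling_iff order.refl order_trans le_of_int_ceiling of_int_le_iff)
  qed
  then show ?thesis
    using finite_int_vectors_bounded finite_subset by blast
qed

section \<open>Weyl chambers as sets of roots positive on a regular vector\<close>

definition positive_roots :: "int^'n^'n \<Rightarrow> (int^'n) set \<Rightarrow> real^'n \<Rightarrow> (int^'n) set" where
  "positive_roots G \<Phi> x = {r \<in> \<Phi>. rbf G (rvec r) x > 0}"

definition regular_vector :: "int^'n^'n \<Rightarrow> (int^'n) set \<Rightarrow> real^'n \<Rightarrow> bool" where
  "regular_vector G \<Phi> x \<longleftrightarrow> x \<in> span (rvec ` \<Phi>) \<and> (\<forall>r\<in>\<Phi>. rbf G (rvec r) x \<noteq> 0)"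

lemma weyl_chamber_roots_iff:
  "weyl_chamber_roots G \<Phi> P \<longleftrightarrow> (\<exists>x. regular_vector G \<Phi> x \<and> P = positive_roots G \<Phi> x)"
  unfolding weyl_chamber_roots_def regular_vector_def positive_roots_def by blast

lemma nonneg_if_nonneg_on_simple_roots:
  fixes \<phi> :: "int^'n \<Rightarrow> 'a::linordered_ab_group_add" and \<psi> :: "int^'n \<Rightarrow> 'b::linordered_ab_group_add"
  assumes "finite P" and pos: "\<And>r. r \<in> P \<Longrightarrow> \<psi> r > 0"
    and \<psi>_add: "\<And>a b. \<psi> (a + b) = \<psi> a + \<psi> b" and \<phi>_add: "\<And>a b. \<phi> (a + b) = \<phi> a + \<phi> b"
    and simple: "\<And>e. e \<in> simple_roots P \<Longrightarrow> \<phi> e \<ge> 0" and "r \<in> P"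
  shows "\<phi> r \<ge> 0"
proof (rule ccontr)
  assume "\<not> \<phi> r \<ge> 0"
  then obtain m where m: "m \<in> P" "\<phi> m < 0" and min: "\<And>s. s \<in> P \<Longrightarrow> \<phi> s < 0 \<Longrightarrow> \<not> \<psi> s < \<psi> m"
    using ex_is_arg_min_if_finite[of "{s \<in> P. \<phi> s < 0}" \<psi>] \<open>finite P\<close> \<open>r \<in> P\<close>
    unfolding is_arg_min_def by force
  then have "m \<notin> simple_roots P"
    using simple by force
  then obtain a b where "a \<in> P" "b \<in> P" "m = a + b"
    using m(1) unfolding simple_roots_def by blast
  moreover from this have "\<psi> a < \<psi> m" "\<psi> b < \<psi> m"
    using pos \<psi>_add by (simp_all add: add_pos_pos)
  ultimately have "\<phi> a \<ge> 0" "\<phi> b \<ge> 0"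
    using min by (meson not_le)+
  then show False
    using m(2) \<phi>_add \<open>m = a + b\<close> by (metis add_nonneg_nonneg not_le)
qed

lemma sgn_stable_under_small_perturbation:
  fixes f g :: "'a \<Rightarrow> real"
  assumes "finite T"
  obtains \<epsilon> where "\<epsilon> > 0" and "\<And>t. t \<in> T \<Longrightarrow> f t \<noteq> 0 \<Longrightarrow> sgn (f t + \<epsilon> * g t) = sgn (f t)"
proof -
  have "\<forall>\<^sub>F \<epsilon> in at_right 0. \<forall>t\<in>T. f t \<noteq> 0 \<longrightarrow> sgn (f t + \<epsilon> * g t) = sgn (f t)"
  proof (intro eventually_ball_finite assms ballI)
    fix t assume "t \<in> T"
    have lim: "((\<lambda>\<epsilon>. f t + \<epsilon> * g t) \<longlongrightarrow> f t) (at_right 0)"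
      by (auto intro!: tendsto_eq_intros)
    consider "f t > 0" | "f t < 0" | "f t = 0"
      by linarith
    then show "\<forall>\<^sub>F \<epsilon> in at_right 0. f t \<noteq> 0 \<longrightarrow> sgn (f t + \<epsilon> * g t) = sgn (f t)"
    proof cases
      case 1
      with order_tendstoD(1)[OF lim, of 0] show ?thesis
        by (auto elim!: eventually_mono)
    next
      case 2
      with order_tendstoD(2)[OF lim, of 0] show ?thesis
        by (auto elim!: eventually_mono)
    qed simp
  qed
  then obtain b where "b > 0" and b: "\<forall>\<epsilon>>0. \<epsilon> < b \<longrightarrow> (\<forall>t\<in>T. f t \<noteq> 0 \<longrightarrow> sgn (f t + \<epsilon> * g t) = sgn (f t))"
    by (auto simp: eventually_at_right_field)
  moreover have "b / 2 > 0" "b / 2 < b"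
    using \<open>b > 0\<close> by simp_all
  ultimately show ?thesis
    using that[of "b / 2"] by blast
qed

lemma exists_regular_perturbation:
  fixes R S :: "(real^'n) set"
  assumes "finite R" and "\<And>r. r \<in> R \<Longrightarrow> rbf G r r \<noteq> 0" and "finite S"
  shows "\<exists>x'. x' - x \<in> span R \<and> (\<forall>r\<in>R. rbf G r x' \<noteq> 0)
    \<and> (\<forall>s\<in>S. rbf G s x \<noteq> 0 \<longrightarrow> sgn (rbf G s x') = sgn (rbf G s x))"
  using assms
proof (induction R arbitrary: S rule: finite_induct)
  case empty
  show ?case
    by (intro exI[of _ x]) simp
next
  case (insert a R)
  have "\<exists>x1. x1 - x \<in> span R \<and> (\<forall>r\<in>R. rbf G r x1 \<noteq> 0)
    \<and> (\<forall>s\<in>insert a S. rbf G s x \<noteq> 0 \<longrightarrow> sgn (rbf G s x1) = sgn (rbf G s x))"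
    by (rule insert.IH) (use insert.prems in auto)
  then obtain x1 where x1: "x1 - x \<in> span R" "\<forall>r\<in>R. rbf G r x1 \<noteq> 0"
    "\<forall>s\<in>insert a S. rbf G s x \<noteq> 0 \<longrightarrow> sgn (rbf G s x1) = sgn (rbf G s x)"
    by blast
  obtain \<epsilon> where "\<epsilon> > 0" and \<epsilon>: "\<And>t. t \<in> insert a (R \<union> S) \<Longrightarrow> rbf G t x1 \<noteq> 0 \<Longrightarrow>
      sgn (rbf G t x1 + \<epsilon> * rbf G t a) = sgn (rbf G t x1)"
    using sgn_stable_under_small_perturbation[of "insert a (R \<union> S)" "\<lambda>t. rbf G t x1" "\<lambda>t. rbf G t a"]
      insert.hyps(1) insert.prems(2) by auto
  \<comment> \<open>a small multiple of a keeps all nonzero signs and, as a.a \<noteq> 0, makes a.x nonzero\<close>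
  define x2 where "x2 = x1 + \<epsilon> *\<^sub>R a"
  have x2: "rbf G t x2 = rbf G t x1 + \<epsilon> * rbf G t a" for t
    unfolding x2_def by (simp add: rbf_linear)
  show ?case
  proof (intro exI[of _ x2] conjI ballI impI)
    have "x2 - x = (x1 - x) + \<epsilon> *\<^sub>R a"
      unfolding x2_def by simp
    moreover have "x1 - x \<in> span (insert a R)"
      using x1(1) span_mono[of R "insert a R"] by blast
    moreover have "\<epsilon> *\<^sub>R a \<in> span (insert a R)"
      by (simp add: span_base span_mul)
    ultimately show "x2 - x \<in> span (insert a R)"
      by (metis span_add)
  next
    fix r assume "r \<in> insert a R"
    then show "rbf G r x2 \<noteq> 0"
      using \<epsilon>[of r] x1(2) \<open>\<epsilon> > 0\<close> insert.prems(1)[of a]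
      by (cases "rbf G r x1 = 0") (auto simp: x2 sgn_0_0)
  next
    fix s assume "s \<in> S" "rbf G s x \<noteq> 0"
    then have "sgn (rbf G s x1) = sgn (rbf G s x)"
      using x1(3) by blast
    moreover from this have "rbf G s x1 \<noteq> 0"
      using \<open>rbf G s x \<noteq> 0\<close> by (metis sgn_0_0)
    ultimately show "sgn (rbf G s x2) = sgn (rbf G s x)"
      using \<epsilon>[of s] \<open>s \<in> S\<close> by (simp add: x2)
  qed
qed

lemma exists_regular_refinement:
  assumes "finite \<Phi>" and roots: "\<And>r. r \<in> \<Phi> \<Longrightarrow> bf G r r = -2"
    and "\<Psi> \<subseteq> \<Phi>" and "regular_vector G \<Psi> x"
  obtains x' where "regular_vector G \<Phi> x'" and "positive_roots G \<Phi> x' \<inter> \<Psi> = positive_roots G \<Psi> x"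
proof -
  have "finite \<Psi>"
    using \<open>finite \<Phi>\<close> \<open>\<Psi> \<subseteq> \<Phi>\<close> by (rule finite_subset[rotated])
  have "rbf G r r \<noteq> 0" if "r \<in> rvec ` \<Phi>" for r
    using that roots by (auto simp: rbf_rvec)
  then obtain x' where x': "x' - x \<in> span (rvec ` \<Phi>)" "\<forall>r\<in>\<Phi>. rbf G (rvec r) x' \<noteq> 0"
    "\<forall>s\<in>\<Psi>. rbf G (rvec s) x \<noteq> 0 \<longrightarrow> sgn (rbf G (rvec s) x') = sgn (rbf G (rvec s) x)"
    using exists_regular_perturbation[of "rvec ` \<Phi>" G "rvec ` \<Psi>" x] \<open>finite \<Phi>\<close> \<open>finite \<Psi>\<close>
    by auto
  have "x \<in> span (rvec ` \<Phi>)"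
    using \<open>regular_vector G \<Psi> x\<close> span_mono[of "rvec ` \<Psi>" "rvec ` \<Phi>"] \<open>\<Psi> \<subseteq> \<Phi>\<close>
    unfolding regular_vector_def by auto
  then have "x' \<in> span (rvec ` \<Phi>)"
    using x'(1) by (metis diff_add_cancel span_add)
  then have "regular_vector G \<Phi> x'"
    using x'(2) by (simp add: regular_vector_def)
  moreover have "rbf G (rvec r) x' > 0 \<longleftrightarrow> rbf G (rvec r) x > 0" if "r \<in> \<Psi>" for r
  proof -
    have "rbf G (rvec r) x \<noteq> 0"
      using \<open>regular_vector G \<Psi> x\<close> that unfolding regular_vector_def by blast
    then have "sgn (rbf G (rvec r) x') = sgn (rbf G (rvec r) x)"
      using x'(3) that by blast
    then show ?thesis
      by (metis sgn_greater)
  qed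
  ultimately show thesis
    using that \<open>\<Psi> \<subseteq> \<Phi>\<close> unfolding positive_roots_def by blast
qed

lemma weyl_chamber_roots_exists:
  assumes "finite \<Phi>" and "\<And>r. r \<in> \<Phi> \<Longrightarrow> bf G r r = -2"
  obtains P where "weyl_chamber_roots G \<Phi> P"
proof -
  have "regular_vector G {} 0"
    by (simp add: regular_vector_def)
  then obtain x where "regular_vector G \<Phi> x"
    using exists_regular_refinement[OF assms, of "{}"] by blast
  then show thesis
    using that weyl_chamber_roots_iff by blast
qed

lemma zspan_base: "a \<in> A \<Longrightarrow> a \<in> zspan A"
  using zspan_add[OF zspan_zero] by fastforce

lemma zspan_subset:
  assumes "A \<subseteq> B" and "0 \<in> B" and "\<And>x a. x \<in> B \<Longrightarrow> a \<in> A \<Longrightarrow> x + a \<in> B \<and> x - a \<in> B"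
  shows "zspan A \<subseteq> B"
proof
  fix x assume "x \<in> zspan A"
  then show "x \<in> B"
    by (induction rule: zspan.induct) (use assms in auto)
qed

lemma perp_lattice_zspan: "perp_lattice G (zspan A) = perp_lattice G A"
proof
  show "perp_lattice G (zspan A) \<subseteq> perp_lattice G A"
    unfolding perp_lattice_def using zspan_base by blast
  show "perp_lattice G A \<subseteq> perp_lattice G (zspan A)"
  proof
    fix x assume "x \<in> perp_lattice G A"
    then have "zspan A \<subseteq> {a. bf G x a = 0}"
      by (intro zspan_subset) (auto simp: perp_lattice_def bf_linear)
    then show "x \<in> perp_lattice G (zspan A)"
      unfolding perp_lattice_def by blast
  qed
qed

lemma lattice_roots_zspan_perp:
  "lattice_roots G (zspan (lattice_roots G (perp_lattice G A))) = lattice_roots G (perp_lattice G A)"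
proof -
  have "zspan (lattice_roots G (perp_lattice G A)) \<subseteq> perp_lattice G A"
    by (intro zspan_subset) (auto simp: lattice_roots_def perp_lattice_def bf_linear)
  then show ?thesis
    by (auto simp: lattice_roots_def intro: zspan_base)
qed

lemma root_n_0_eq: "root_n G h 0 = lattice_roots G (perp_lattice G {h})"
  by (auto simp: root_n_def lattice_roots_def perp_lattice_def)

lemma weyl_chamber_rt_iff:
  "weyl_chamber G (rt G h) P
    \<longleftrightarrow> (\<exists>x. regular_vector G (root_n G h 0) x \<and> P = positive_roots G (root_n G h 0) x)"
  unfolding weyl_chamber_def rt_def root_n_0_eq lattice_roots_zspan_perp weyl_chamber_roots_iff ..

lemma weyl_chamber_perp_iff:
  "weyl_chamber G (perp_lattice G (zspan (insert h \<Gamma>))) P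
    \<longleftrightarrow> weyl_chamber_roots G (root_n G h 0 \<inter> perp_lattice G \<Gamma>) P"
proof -
  have "lattice_roots G (perp_lattice G (insert h \<Gamma>)) = root_n G h 0 \<inter> perp_lattice G \<Gamma>"
    by (auto simp: root_n_def lattice_roots_def perp_lattice_def)
  then show ?thesis
    unfolding weyl_chamber_def perp_lattice_zspan lattice_roots_zspan_perp by simp
qed

lemma is_face_positive_roots_iff:
  "is_face (positive_roots G (root_n G h 0) x) P' (perp_lattice G (zspan (insert h \<Gamma>)))
    \<longleftrightarrow> positive_roots G (root_n G h 0) x \<inter> perp_lattice G \<Gamma> = P'"
  unfolding is_face_def perp_lattice_zspan
  by (auto simp: positive_roots_def perp_lattice_def root_n_def)

section \<open>Simple reflections and descent to a compatible chamber\<close>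

definition reflect :: "int^'n^'n \<Rightarrow> int^'n \<Rightarrow> int^'n \<Rightarrow> int^'n" where
  "reflect G e r = r + bf G r e *s e"

definition violating_roots :: "int^'n^'n \<Rightarrow> (int^'n) set \<Rightarrow> (int^'n) set \<Rightarrow> (int^'n) set" where
  "violating_roots G \<Gamma> P = {r \<in> P. \<exists>l\<in>\<Gamma>. bf G l r < 0}"

lemma compatible_iff_nonneg_on_simple_roots:
  "\<Gamma> \<subseteq> root_n G h 1 \<Longrightarrow> compatible G h P \<Gamma> \<longleftrightarrow> (\<forall>l\<in>\<Gamma>. \<forall>e\<in>simple_roots P. bf G l e \<ge> 0)"
  unfolding compatible_def Fn_def by auto

context
  fixes G :: "int^'n^'n" and h :: "int^'n"
  assumes pol: "polarized G h"
begin

lemma bf_sym: "bf G x y = bf G y x"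
  using bf_commute polarized_sym[OF pol] by blast

lemma root_n_0_minus: "r \<in> root_n G h 0 \<Longrightarrow> - r \<in> root_n G h 0"
  by (simp add: root_n_def bf_linear)

lemma reflect_root: "e \<in> root_n G h 0 \<Longrightarrow> r \<in> root_n G h 0 \<Longrightarrow> reflect G e r \<in> root_n G h 0"
  unfolding reflect_def root_n_def using bf_sym[of e r] by (simp add: bf_linear algebra_simps)

lemma reflect_reflect: "e \<in> root_n G h 0 \<Longrightarrow> reflect G e (reflect G e r) = r"
  unfolding reflect_def root_n_def by (simp add: bf_linear vec_eq_iff algebra_simps)

lemma reflect_self: "e \<in> root_n G h 0 \<Longrightarrow> reflect G e e = - e"
  unfolding reflect_def root_n_def by (simp add: vec_eq_iff)

lemma rbf_reflect:
  "rbf G (rvec (reflect G e r)) x = rbf G (rvec r) (x + rbf G (rvec e) x *\<^sub>R rvec e)"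
  unfolding reflect_def by (simp add: rbf_linear rvec_add rvec_smult rbf_rvec)

lemma finite_positive_roots: "finite (positive_roots G (root_n G h 0) x)"
  using finite_root_n_0[OF pol] by (simp add: positive_roots_def)

lemma minus_positive_root_iff:
  assumes "regular_vector G (root_n G h 0) x" and "r \<in> root_n G h 0"
  shows "- r \<in> positive_roots G (root_n G h 0) x \<longleftrightarrow> r \<notin> positive_roots G (root_n G h 0) x"
  using assms root_n_0_minus[of r]
  by (auto simp: positive_roots_def regular_vector_def rvec_minus rbf_linear)

lemma reflect_simple_root_positive:
  assumes reg: "regular_vector G (root_n G h 0) x"
    and e: "e \<in> simple_roots (positive_roots G (root_n G h 0) x)"
    and r: "r \<in> positive_roots G (root_n G h 0) x" and "r \<noteq> e"
  shows "reflect G e r \<in> positive_roots G (root_n G h 0) x"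
proof -
  let ?P = "positive_roots G (root_n G h 0) x"
  have "e \<in> ?P"
    using e by (simp add: simple_roots_def)
  then have eR: "e \<in> root_n G h 0" and ex: "rbf G (rvec e) x > 0"
    by (auto simp: positive_roots_def)
  have rR: "r \<in> root_n G h 0" and rx: "rbf G (rvec r) x > 0"
    using r by (auto simp: positive_roots_def)
  have reflect_x: "rbf G (rvec (reflect G e r)) x = rbf G (rvec r) x + of_int (bf G r e) * rbf G (rvec e) x"
    unfolding reflect_def by (simp add: rvec_add rvec_smult rbf_linear)
  show ?thesis
  proof (cases "bf G r e \<ge> 0")
    case True
    then have "rbf G (rvec (reflect G e r)) x > 0"
      unfolding reflect_x using rx ex by (simp add: add_pos_nonneg)
    then show ?thesis
      using reflect_root[OF eR rR] by (simp add: positive_roots_def)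
  next
    case False
    \<comment> \<open>r - e is nonzero and orthogonal to h, so (r - e)^2 = -4 - 2 r.e < 0, forcing r.e = -1\<close>
    have "bf G (r - e) (r - e) < 0"
      using bf_self_neg_if_perp[OF pol, of "r - e"] rR eR \<open>r \<noteq> e\<close>
      by (simp add: root_n_def bf_linear)
    then have "bf G r e = -1"
      using False rR eR bf_sym[of e r] by (simp add: root_n_def bf_linear)
    then have reflect_eq: "reflect G e r = r - e"
      unfolding reflect_def by (simp add: vec_eq_iff)
    show ?thesis
    proof (rule ccontr)
      assume "reflect G e r \<notin> ?P"
      then have "e - r \<in> ?P"
        using minus_positive_root_iff[OF reg reflect_root[OF eR rR]] reflect_eq by simp
      moreover have "e = r + (e - r)"
        by simp
      ultimately show False
        using e r unfolding simple_roots_def by blast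
    qed
  qed
qed

lemma reflect_simple_root_mem_iff:
  assumes reg: "regular_vector G (root_n G h 0) x"
    and e: "e \<in> simple_roots (positive_roots G (root_n G h 0) x)"
    and "r \<in> root_n G h 0"
  shows "reflect G e r \<in> positive_roots G (root_n G h 0) x
    \<longleftrightarrow> (r \<in> positive_roots G (root_n G h 0) x \<and> r \<noteq> e) \<or> r = - e"
proof -
  let ?P = "positive_roots G (root_n G h 0) x"
  have "e \<in> ?P"
    using e by (simp add: simple_roots_def)
  then have eR: "e \<in> root_n G h 0" and "- e \<notin> ?P"
    using minus_positive_root_iff[OF reg] by (auto simp: positive_roots_def)
  consider "r = e" | "r = - e" | "r \<noteq> e" "r \<noteq> - e"
    by blast
  then show ?thesis
  proof cases
    case 1
    have "e \<noteq> - e"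
      using \<open>e \<in> ?P\<close> \<open>- e \<notin> ?P\<close> by metis
    then show ?thesis
      using 1 reflect_self[OF eR] \<open>- e \<notin> ?P\<close> by simp
  next
    case 2
    then have "reflect G e r = e"
      using reflect_reflect[OF eR, of e] reflect_self[OF eR] by simp
    then show ?thesis
      using 2 \<open>e \<in> ?P\<close> by simp
  next
    case 3
    have "reflect G e r \<noteq> e"
      using 3 reflect_reflect[OF eR, of r] reflect_self[OF eR] by metis
    then have "reflect G e r \<in> ?P \<longleftrightarrow> r \<in> ?P"
      using reflect_simple_root_positive[OF reg e] reflect_reflect[OF eR, of r] 3 by metis
    then show ?thesis
      using 3 by simp
  qed
qed

lemma positive_roots_reflect_simple:
  assumes reg: "regular_vector G (root_n G h 0) x"
    and e: "e \<in> simple_roots (positive_roots G (root_n G h 0) x)"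
  defines "x' \<equiv> x + rbf G (rvec e) x *\<^sub>R rvec e"
  shows "regular_vector G (root_n G h 0) x'"
    and "positive_roots G (root_n G h 0) x' = insert (- e) (positive_roots G (root_n G h 0) x - {e})"
proof -
  have eR: "e \<in> root_n G h 0"
    using e by (simp add: simple_roots_def positive_roots_def)
  have x': "rbf G (rvec r) x' = rbf G (rvec (reflect G e r)) x" for r
    unfolding x'_def rbf_reflect ..
  have "rvec e \<in> span (rvec ` root_n G h 0)"
    using eR by (intro span_base) simp
  then show "regular_vector G (root_n G h 0) x'"
    using reg reflect_root[OF eR] unfolding regular_vector_def x'_def[symmetric] x'
    by (auto simp: x'_def intro: span_add span_mul)
  show "positive_roots G (root_n G h 0) x' = insert (- e) (positive_roots G (root_n G h 0) x - {e})"
    using reflect_simple_root_mem_iff[OF reg e] reflect_root[OF eR] root_n_0_minus[OF eR]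
    unfolding positive_roots_def x' by auto
qed

lemma compatible_nonneg:
  assumes "compatible G h (positive_roots G (root_n G h 0) x) \<Gamma>"
    and "l \<in> \<Gamma>" and "r \<in> positive_roots G (root_n G h 0) x"
  shows "bf G l r \<ge> 0"
proof (rule nonneg_if_nonneg_on_simple_roots[OF finite_positive_roots, where \<psi>="\<lambda>r. rbf G (rvec r) x"])
  show "\<And>e. e \<in> simple_roots (positive_roots G (root_n G h 0) x) \<Longrightarrow> bf G l e \<ge> 0"
    using assms(1,2) unfolding compatible_def Fn_def by blast
qed (use assms(3) in \<open>auto simp: positive_roots_def rvec_add rbf_linear bf_linear\<close>)

lemma compatible_imp_not_separating:
  assumes "regular_vector G (root_n G h 0) x" and "compatible G h (positive_roots G (root_n G h 0) x) \<Gamma>"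
  shows "\<not> separating G h \<Gamma> r"
proof
  assume "separating G h \<Gamma> r"
  then obtain u v where r: "r \<in> root_n G h 0" and "u \<in> \<Gamma>" "v \<in> \<Gamma>" "bf G u r > 0" "bf G v r < 0"
    unfolding separating_def using bf_sym by auto
  then show False
    using compatible_nonneg[OF assms(2), of v r] compatible_nonneg[OF assms(2), of u "- r"]
      minus_positive_root_iff[OF assms(1) r] by (force simp: bf_linear)
qed

lemma compatible_chambers_eq:
  assumes "regular_vector G (root_n G h 0) x1" "compatible G h (positive_roots G (root_n G h 0) x1) \<Gamma>"
    and "regular_vector G (root_n G h 0) x2" "compatible G h (positive_roots G (root_n G h 0) x2) \<Gamma>"
    and "positive_roots G (root_n G h 0) x1 \<inter> perp_lattice G \<Gamma> = positive_roots G (root_n G h 0) x2 \<inter> perp_lattice G \<Gamma>"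
  shows "positive_roots G (root_n G h 0) x1 = positive_roots G (root_n G h 0) x2"
proof -
  have subset: "positive_roots G (root_n G h 0) y1 \<subseteq> positive_roots G (root_n G h 0) y2"
    if "regular_vector G (root_n G h 0) y2"
      and "compatible G h (positive_roots G (root_n G h 0) y1) \<Gamma>"
      and "compatible G h (positive_roots G (root_n G h 0) y2) \<Gamma>"
      and "positive_roots G (root_n G h 0) y1 \<inter> perp_lattice G \<Gamma> \<subseteq> positive_roots G (root_n G h 0) y2"
    for y1 y2
  proof
    fix r assume r: "r \<in> positive_roots G (root_n G h 0) y1"
    then have rR: "r \<in> root_n G h 0"
      by (simp add: positive_roots_def)
    show "r \<in> positive_roots G (root_n G h 0) y2"
    proof (cases "r \<in> perp_lattice G \<Gamma>")
      case True
      then show ?thesis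
        using r that(4) by blast
    next
      case False
      then obtain l where "l \<in> \<Gamma>" "bf G l r \<noteq> 0"
        unfolding perp_lattice_def using bf_sym by auto
      then have "bf G l r > 0"
        using compatible_nonneg[OF that(2) _ r] by force
      then show ?thesis
        using compatible_nonneg[OF that(3) \<open>l \<in> \<Gamma>\<close>, of "- r"] minus_positive_root_iff[OF that(1) rR]
        by (force simp: bf_linear)
    qed
  qed
  show ?thesis
    using subset[of x2 x1] subset[of x1 x2] assms by blast
qed

lemma reflect_simple_root_descent:
  assumes nosep: "\<nexists>r. separating G h \<Gamma> r" and reg: "regular_vector G (root_n G h 0) x"
    and e: "e \<in> simple_roots (positive_roots G (root_n G h 0) x)"
    and l0: "l0 \<in> \<Gamma>" "bf G l0 e < 0"
  defines "x' \<equiv> x + rbf G (rvec e) x *\<^sub>R rvec e"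
  shows "regular_vector G (root_n G h 0) x'"
    and "positive_roots G (root_n G h 0) x' \<inter> perp_lattice G \<Gamma>
      = positive_roots G (root_n G h 0) x \<inter> perp_lattice G \<Gamma>"
    and "card (violating_roots G \<Gamma> (positive_roots G (root_n G h 0) x'))
      < card (violating_roots G \<Gamma> (positive_roots G (root_n G h 0) x))"
proof -
  let ?P = "positive_roots G (root_n G h 0)"
  have eP: "e \<in> ?P x" and eR: "e \<in> root_n G h 0"
    using e by (auto simp: simple_roots_def positive_roots_def)
  show "regular_vector G (root_n G h 0) x'"
    using positive_roots_reflect_simple(1)[OF reg e] unfolding x'_def .
  have P': "?P x' = insert (- e) (?P x - {e})"
    using positive_roots_reflect_simple(2)[OF reg e] unfolding x'_def .
  have "e \<notin> perp_lattice G \<Gamma>" "- e \<notin> perp_lattice G \<Gamma>"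
    using l0 bf_sym[of l0 e] unfolding perp_lattice_def by (force simp: bf_linear)+
  then show "?P x' \<inter> perp_lattice G \<Gamma> = ?P x \<inter> perp_lattice G \<Gamma>"
    unfolding P' by blast
  have "- e \<notin> violating_roots G \<Gamma> (?P x')"
  proof
    assume "- e \<in> violating_roots G \<Gamma> (?P x')"
    then obtain l where "l \<in> \<Gamma>" "bf G e l > 0"
      unfolding violating_roots_def using bf_sym by (auto simp: bf_linear)
    moreover have "bf G e l0 < 0"
      using l0 bf_sym by simp
    ultimately show False
      using nosep eR l0(1) unfolding separating_def by blast
  qed
  then have "violating_roots G \<Gamma> (?P x') = violating_roots G \<Gamma> (?P x) - {e}"
    unfolding P' violating_roots_def by auto
  moreover have "e \<in> violating_roots G \<Gamma> (?P x)"
    using eP l0 by (auto simp: violating_roots_def)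
  moreover have "finite (violating_roots G \<Gamma> (?P x))"
    using finite_positive_roots by (simp add: violating_roots_def)
  ultimately show "card (violating_roots G \<Gamma> (?P x')) < card (violating_roots G \<Gamma> (?P x))"
    by (metis card_Diff1_less)
qed

lemma descent_to_compatible:
  assumes nosep: "\<nexists>r. separating G h \<Gamma> r" and "\<Gamma> \<subseteq> root_n G h 1"
    and "regular_vector G (root_n G h 0) x"
  shows "\<exists>x'. regular_vector G (root_n G h 0) x'
    \<and> compatible G h (positive_roots G (root_n G h 0) x') \<Gamma>
    \<and> positive_roots G (root_n G h 0) x' \<inter> perp_lattice G \<Gamma>
      = positive_roots G (root_n G h 0) x \<inter> perp_lattice G \<Gamma>"
  using assms(3)
proof (induction "card (violating_roots G \<Gamma> (positive_roots G (root_n G h 0) x))"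
    arbitrary: x rule: less_induct)
  case less
  show ?case
  proof (cases "compatible G h (positive_roots G (root_n G h 0) x) \<Gamma>")
    case True
    with less.prems show ?thesis
      by blast
  next
    case False
    then obtain e l0 where "e \<in> simple_roots (positive_roots G (root_n G h 0) x)"
      and "l0 \<in> \<Gamma>" "bf G l0 e < 0"
      using compatible_iff_nonneg_on_simple_roots[OF assms(2)] by (auto simp: not_le)
    from reflect_simple_root_descent[OF nosep less.prems this] show ?thesis
      using less.hyps by metis
  qed
qed

lemma exists_compatible_chamber_with_face:
  assumes nosep: "\<nexists>r. separating G h \<Gamma> r" and "\<Gamma> \<subseteq> root_n G h 1"
    and "weyl_chamber_roots G (root_n G h 0 \<inter> perp_lattice G \<Gamma>) P'"
  obtains x where "regular_vector G (root_n G h 0) x"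
    and "compatible G h (positive_roots G (root_n G h 0) x) \<Gamma>"
    and "positive_roots G (root_n G h 0) x \<inter> perp_lattice G \<Gamma> = P'"
proof -
  let ?N = "root_n G h 0 \<inter> perp_lattice G \<Gamma>"
  obtain x' where "regular_vector G ?N x'" and "P' = positive_roots G ?N x'"
    using assms(3) weyl_chamber_roots_iff by blast
  then obtain x1 where reg1: "regular_vector G (root_n G h 0) x1"
    and "positive_roots G (root_n G h 0) x1 \<inter> ?N = P'"
    using exists_regular_refinement[OF finite_root_n_0[OF pol], of G ?N x'] by (auto simp: root_n_def)
  then have "positive_roots G (root_n G h 0) x1 \<inter> perp_lattice G \<Gamma> = P'"
    by (auto simp: positive_roots_def)
  then show thesis
    using descent_to_compatible[OF nosep assms(2) reg1] that by metis
qed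

lemma compatible_chamber_exists_iff:
  assumes "\<Gamma> \<subseteq> root_n G h 1"
  shows "(\<exists>P. weyl_chamber G (rt G h) P \<and> compatible G h P \<Gamma>) \<longleftrightarrow> (\<nexists>r. separating G h \<Gamma> r)"
proof
  assume "\<exists>P. weyl_chamber G (rt G h) P \<and> compatible G h P \<Gamma>"
  then obtain x where x: "regular_vector G (root_n G h 0) x"
    "compatible G h (positive_roots G (root_n G h 0) x) \<Gamma>"
    unfolding weyl_chamber_rt_iff by auto
  show "\<nexists>r. separating G h \<Gamma> r"
    using compatible_imp_not_separating[OF x] by simp
next
  assume nosep: "\<nexists>r. separating G h \<Gamma> r"
  have "finite (root_n G h 0 \<inter> perp_lattice G \<Gamma>)"
    using finite_root_n_0[OF pol] by simp
  moreover have "bf G r r = -2" if "r \<in> root_n G h 0 \<inter> perp_lattice G \<Gamma>" for r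
    using that by (simp add: root_n_def)
  ultimately obtain P' where "weyl_chamber_roots G (root_n G h 0 \<inter> perp_lattice G \<Gamma>) P'"
    using weyl_chamber_roots_exists by blast
  then obtain x where "regular_vector G (root_n G h 0) x"
    and "compatible G h (positive_roots G (root_n G h 0) x) \<Gamma>"
    using exists_compatible_chamber_with_face[OF nosep assms] by blast
  then show "\<exists>P. weyl_chamber G (rt G h) P \<and> compatible G h P \<Gamma>"
    unfolding weyl_chamber_rt_iff by blast
qed

lemma ex1_compatible_chamber_with_face:
  assumes "\<Gamma> \<subseteq> root_n G h 1" and nosep: "\<nexists>r. separating G h \<Gamma> r"
    and "weyl_chamber G (perp_lattice G (zspan (insert h \<Gamma>))) P'"
  shows "\<exists>!P. weyl_chamber G (rt G h) P \<and> compatible G h P \<Gamma>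
    \<and> is_face P P' (perp_lattice G (zspan (insert h \<Gamma>)))"
proof -
  obtain x where x: "regular_vector G (root_n G h 0) x"
    "compatible G h (positive_roots G (root_n G h 0) x) \<Gamma>"
    "positive_roots G (root_n G h 0) x \<inter> perp_lattice G \<Gamma> = P'"
    using exists_compatible_chamber_with_face[OF nosep assms(1)] assms(3)
    unfolding weyl_chamber_perp_iff by blast
  show ?thesis
  proof (rule ex1I[of _ "positive_roots G (root_n G h 0) x"])
    show "weyl_chamber G (rt G h) (positive_roots G (root_n G h 0) x)
      \<and> compatible G h (positive_roots G (root_n G h 0) x) \<Gamma>
      \<and> is_face (positive_roots G (root_n G h 0) x) P' (perp_lattice G (zspan (insert h \<Gamma>)))"
      using x unfolding weyl_chamber_rt_iff is_face_positive_roots_iff by blast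
  next
    fix Q assume Q: "weyl_chamber G (rt G h) Q \<and> compatible G h Q \<Gamma>
      \<and> is_face Q P' (perp_lattice G (zspan (insert h \<Gamma>)))"
    then obtain y where y: "regular_vector G (root_n G h 0) y" "Q = positive_roots G (root_n G h 0) y"
      unfolding weyl_chamber_rt_iff by blast
    then have "compatible G h (positive_roots G (root_n G h 0) y) \<Gamma>"
      and "positive_roots G (root_n G h 0) y \<inter> perp_lattice G \<Gamma> = P'"
      using Q unfolding y(2) is_face_positive_roots_iff by auto
    then show "Q = positive_roots G (root_n G h 0) x"
      using compatible_chambers_eq[OF y(1) _ x(1,2)] x(3) y(2) by simp
  qed
qed

end

theorem lemma2p4:
  fixes G :: "int^'n^'n" and h :: "int^'n" and \<Gamma> :: "(int^'n) set"
  assumes "polarized G h"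
    and "\<Gamma> \<subseteq> root_n G h 1"
  shows "((\<exists>P. weyl_chamber G (rt G h) P \<and> compatible G h P \<Gamma>)
            \<longleftrightarrow> \<not> (\<exists>r. separating G h \<Gamma> r))
         \<and> (\<not> (\<exists>r. separating G h \<Gamma> r) \<longrightarrow>
             (\<forall>P'. weyl_chamber G (perp_lattice G (zspan (insert h \<Gamma>))) P' \<longrightarrow>
               (\<exists>!P. weyl_chamber G (rt G h) P \<and> compatible G h P \<Gamma>
                     \<and> is_face P P' (perp_lattice G (zspan (insert h \<Gamma>))))))"
  using compatible_chamber_exists_iff[OF assms] ex1_compatible_chamber_with_face[OF assms]
  by blast

end
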